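(* Let $R$ be a commutative multiplicative hyperring with identity, let $\alpha$ be a good endomorphism of $R$, and let $I$ be an $\alpha$-prime hyperideal of $R$. Then $E=\{s\in R:\alpha(s)\in I\}$ is an $\alpha$-prime hyperideal of $R$ containing $I$.
   Context: A multiplicative hyperring is an abelian group $(R,+)$ with a hyperoperation $\circ:R\times R\to \mathcal P^*(R)$ (nonempty subsets) such that $a\circ(b\circ c)=(a\circ b)\circ c$, $a\circ(b+c)\subseteq a\circ b+a\circ c$, $(b+c)\circ a\subseteq b\circ a+c\circ a$, and $a\circ(-b)=(-a)\circ b=-(a\circ b)$. Products of subsets are unions of elementwise products. Commutative means $a\circ b=b\circ a$. An identity $1$ satisfies $a\in1\circ a$ for all $a$. A hyperideal is a nonempty $I\subseteq R$ closed under subtraction with $r\circ x\subseteq I$ for $r\in R$, $x\in I$. Standing assumption: every hyperideal is a $\mathbf C$-hyperideal, i.e. for every finite product $A=r_1\circ\cdots\circ r_n$, $A\cap I\ne\emptyset$ implies $A\subseteq I$. A good endomorphism $\alpha$ satisfies $\alpha(x+y)=\alpha(x)+\alpha(y)$ and $\alpha(x\circ y)=\alpha(x)\circ\alpha(y)$; it is applied to sets elementwise. A hyperideal $I$ is $\alpha$-prime if for all $x,y$, $x\circ y\subseteq I$ implies $x\in I$ or $\alpha(y)\in I$. *)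

theory Defs
  imports Main
begin

text \<open>The additive group (R,+) is the whole type 'a (class ab_group_add);
  the hyperoperation is m :: 'a => 'a => 'a set.\<close>

definition hprod :: "('a \<Rightarrow> 'a \<Rightarrow> 'a set) \<Rightarrow> 'a set \<Rightarrow> 'a set \<Rightarrow> 'a set" where
  "hprod m A B = (\<Union>a\<in>A. \<Union>b\<in>B. m a b)"

definition ssum :: "'a::ab_group_add set \<Rightarrow> 'a set \<Rightarrow> 'a set" where
  "ssum A B = {a + b | a b. a \<in> A \<and> b \<in> B}"

definition mult_hyperring :: "('a::ab_group_add \<Rightarrow> 'a \<Rightarrow> 'a set) \<Rightarrow> bool" where
  "mult_hyperring m \<longleftrightarrow>
     (\<forall>a b. m a b \<noteq> {}) \<and>
     (\<forall>a b c. hprod m {a} (m b c) = hprod m (m a b) {c}) \<and>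
     (\<forall>a b c. m a (b + c) \<subseteq> ssum (m a b) (m a c)) \<and>
     (\<forall>a b c. m (b + c) a \<subseteq> ssum (m b a) (m c a)) \<and>
     (\<forall>a b. m a (- b) = uminus ` (m a b) \<and> m (- a) b = uminus ` (m a b))"

definition hcomm :: "('a \<Rightarrow> 'a \<Rightarrow> 'a set) \<Rightarrow> bool" where
  "hcomm m \<longleftrightarrow> (\<forall>a b. m a b = m b a)"

definition has_identity :: "('a \<Rightarrow> 'a \<Rightarrow> 'a set) \<Rightarrow> bool" where
  "has_identity m \<longleftrightarrow> (\<exists>e. \<forall>a. a \<in> m e a)"

text \<open>Finite product r1 o ... o rn of a nonempty list (right-nested;
  by associativity the bracketing is irrelevant).\<close>
fun lprod :: "('a \<Rightarrow> 'a \<Rightarrow> 'a set) \<Rightarrow> 'a list \<Rightarrow> 'a set" where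
  "lprod m [] = {}"
| "lprod m [r] = {r}"
| "lprod m (r # rs) = hprod m {r} (lprod m rs)"

definition hyperideal :: "('a::ab_group_add \<Rightarrow> 'a \<Rightarrow> 'a set) \<Rightarrow> 'a set \<Rightarrow> bool" where
  "hyperideal m I \<longleftrightarrow> I \<noteq> {} \<and> (\<forall>x\<in>I. \<forall>y\<in>I. x - y \<in> I) \<and>
     (\<forall>r. \<forall>x\<in>I. m r x \<subseteq> I)"

definition C_hyperideal :: "('a::ab_group_add \<Rightarrow> 'a \<Rightarrow> 'a set) \<Rightarrow> 'a set \<Rightarrow> bool" where
  "C_hyperideal m I \<longleftrightarrow> hyperideal m I \<and>
     (\<forall>rs. rs \<noteq> [] \<longrightarrow> lprod m rs \<inter> I \<noteq> {} \<longrightarrow> lprod m rs \<subseteq> I)"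

definition good_endo :: "('a::ab_group_add \<Rightarrow> 'a \<Rightarrow> 'a set) \<Rightarrow> ('a \<Rightarrow> 'a) \<Rightarrow> bool" where
  "good_endo m \<alpha> \<longleftrightarrow> (\<forall>x y. \<alpha> (x + y) = \<alpha> x + \<alpha> y) \<and>
     (\<forall>x y. \<alpha> ` (m x y) = m (\<alpha> x) (\<alpha> y))"

definition alpha_prime :: "('a::ab_group_add \<Rightarrow> 'a \<Rightarrow> 'a set) \<Rightarrow> ('a \<Rightarrow> 'a) \<Rightarrow> 'a set \<Rightarrow> bool" where
  "alpha_prime m \<alpha> I \<longleftrightarrow> hyperideal m I \<and>
     (\<forall>x y. m x y \<subseteq> I \<longrightarrow> x \<in> I \<or> \<alpha> y \<in> I)"

end

theory Submission
  imports Defs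
begin

text \<open>Since \<alpha> is additive and multiplicative, the preimage E of I under \<alpha> inherits
  the hyperideal and \<alpha>-prime properties of I directly: a product x \<circ> y lies in E iff
  \<alpha>(x) \<circ> \<alpha>(y) lies in I. For I \<subseteq> E, apply \<alpha>-primeness to 1 \<circ> x \<subseteq> I: either
  \<alpha>(x) \<in> I, or 1 \<in> I and then \<alpha>(x) \<in> \<alpha>(x) \<circ> 1 \<subseteq> I.\<close>

lemma hyperideal_zero: "hyperideal m I \<Longrightarrow> 0 \<in> I"
  unfolding hyperideal_def by (metis all_not_in_conv diff_self)

lemma good_endo_zero:
  assumes "good_endo m \<alpha>"
  shows "\<alpha> 0 = 0"
proof -
  have "\<alpha> (0 + 0) = \<alpha> 0 + \<alpha> 0" using assms unfolding good_endo_def by blast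
  then show ?thesis by simp
qed

lemma good_endo_diff:
  assumes "good_endo m \<alpha>"
  shows "\<alpha> (x - y) = \<alpha> x - \<alpha> y"
proof -
  have "\<alpha> x = \<alpha> (x - y) + \<alpha> y"
    using assms unfolding good_endo_def by (metis diff_add_cancel)
  then show ?thesis by (simp add: algebra_simps)
qed

lemma good_endo_image_hyperop: "good_endo m \<alpha> \<Longrightarrow> \<alpha> ` m x y = m (\<alpha> x) (\<alpha> y)"
  unfolding good_endo_def by blast

lemma hyperop_subset_vimage_iff:
  "good_endo m \<alpha> \<Longrightarrow> m x y \<subseteq> \<alpha> -` I \<longleftrightarrow> m (\<alpha> x) (\<alpha> y) \<subseteq> I"
  by (auto simp flip: good_endo_image_hyperop)

lemma hyperideal_vimage:
  assumes "good_endo m \<alpha>" and "hyperideal m I"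
  shows "hyperideal m (\<alpha> -` I)"
  unfolding hyperideal_def
proof (intro conjI ballI allI)
  show "\<alpha> -` I \<noteq> {}"
    using hyperideal_zero[OF assms(2)] good_endo_zero[OF assms(1)] by auto
next
  fix x y assume "x \<in> \<alpha> -` I" "y \<in> \<alpha> -` I"
  then show "x - y \<in> \<alpha> -` I"
    using assms(2) good_endo_diff[OF assms(1)] unfolding hyperideal_def by auto
next
  fix r x assume "x \<in> \<alpha> -` I"
  then show "m r x \<subseteq> \<alpha> -` I"
    using assms(2) hyperop_subset_vimage_iff[OF assms(1)] unfolding hyperideal_def by auto
qed

lemma alpha_prime_vimage:
  assumes "good_endo m \<alpha>" and "alpha_prime m \<alpha> I"
  shows "alpha_prime m \<alpha> (\<alpha> -` I)"
  unfolding alpha_prime_def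
proof (intro conjI allI impI)
  show "hyperideal m (\<alpha> -` I)"
    using assms hyperideal_vimage unfolding alpha_prime_def by blast
next
  fix x y assume "m x y \<subseteq> \<alpha> -` I"
  then have "m (\<alpha> x) (\<alpha> y) \<subseteq> I"
    using hyperop_subset_vimage_iff[OF assms(1)] by blast
  then have "\<alpha> x \<in> I \<or> \<alpha> (\<alpha> y) \<in> I"
    using assms(2) unfolding alpha_prime_def by blast
  then show "x \<in> \<alpha> -` I \<or> \<alpha> y \<in> \<alpha> -` I" by simp
qed

lemma alpha_prime_subset_vimage:
  assumes "hcomm m" and "has_identity m" and "alpha_prime m \<alpha> I"
  shows "I \<subseteq> \<alpha> -` I"
proof
  fix x assume x: "x \<in> I"
  obtain e where e: "\<And>a. a \<in> m e a"
    using assms(2) unfolding has_identity_def by blast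
  have absorb: "\<And>r y. y \<in> I \<Longrightarrow> m r y \<subseteq> I"
    using assms(3) unfolding alpha_prime_def hyperideal_def by blast
  have "e \<in> I \<or> \<alpha> x \<in> I"
    using assms(3) absorb[OF x, of e] unfolding alpha_prime_def by blast
  moreover have "\<alpha> x \<in> I" if "e \<in> I"
    using e[of "\<alpha> x"] absorb[OF that, of "\<alpha> x"] assms(1) unfolding hcomm_def by auto
  ultimately show "x \<in> \<alpha> -` I" by auto
qed

theorem mainTheorem5:
  fixes m :: "'a::ab_group_add \<Rightarrow> 'a \<Rightarrow> 'a set" and \<alpha> :: "'a \<Rightarrow> 'a" and I :: "'a set"
  assumes "mult_hyperring m" and "hcomm m" and "has_identity m"
    and "\<forall>J. hyperideal m J \<longrightarrow> C_hyperideal m J"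
    and "good_endo m \<alpha>"
    and "alpha_prime m \<alpha> I"
  shows "alpha_prime m \<alpha> {s. \<alpha> s \<in> I} \<and> I \<subseteq> {s. \<alpha> s \<in> I}"
  using alpha_prime_vimage[OF assms(5,6)] alpha_prime_subset_vimage[OF assms(2,3,6)]
  by (simp add: vimage_def)

end
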